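(* Let $K$ be a field, let $e_1,\dots,e_m$ be a basis of $K^m$, and let $T_1,\dots,T_k:K^m\to K^n$ be linear maps. Suppose that for every $l$ and every choice of distinct indices $i_1,\dots,i_l\in\{1,\dots,m\}$, the span of the vectors $\{T_j(e_{i_t}): 1\le t\le l,\ 1\le j\le k\}$ has dimension at least $l$. Then there exists a function $\phi:\{1,\dots,m\}\to\{1,\dots,k\}$ such that the vectors $T_{\phi(1)}(e_1),T_{\phi(2)}(e_2),\dots,T_{\phi(m)}(e_m)$ are linearly independent. *)

theory Defs
  imports "HOL-Analysis.Analysis"
begin

end

theory Submission
  imports Defs
begin

(* This is Rado's theorem for the candidate sets A i = {T j (e i) | j \<in> {1..k}}, proved by
   induction on their total size. If some A i0 contains two vectors x1 \<noteq> x2, deleting one of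
   them preserves the Rado condition card S \<le> dim (\<Union>i\<in>S. A i): otherwise there are sets
   S1, S2, both containing i0, that violate it after deleting x1 resp. x2, with vector sets
   U1, U2. By submodularity of the rank,
     dim U1 + dim U2 \<ge> dim (U1 \<union> U2) + dim (span U1 \<inter> span U2)
                     \<ge> card (S1 \<union> S2) + card (S1 \<inter> S2 - {i0}) = card S1 + card S2 - 1,
   contradicting dim U1 < card S1 and dim U2 < card S2. Once every A i is a singleton,
   the Rado condition for the whole index set says that the chosen vectors span a space
   whose dimension is the number of indices, so they are distinct and independent. *)

context finite_dimensional_vector_space
begin

lemma dim_Un_add_dim_span_Int: "dim (X \<union> Y) + dim (span X \<inter> span Y) = dim X + dim Y"
  using dim_sums_Int[OF subspace_span subspace_span, of X Y] by (simp add: span_Un[symmetric])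

lemma inj_on_independent_if_card_le_dim:
  assumes "finite I" and "card I \<le> dim (f ` I)"
  shows "inj_on f I \<and> independent (f ` I)"
proof -
  have "dim (f ` I) \<le> card (f ` I)"
    using dim_le_card[OF span_superset] \<open>finite I\<close> by blast
  moreover have "card (f ` I) \<le> card I"
    using \<open>finite I\<close> by (rule card_image_le)
  ultimately have "card (f ` I) = card I" "card (f ` I) \<le> dim (f ` I)"
    using assms(2) by linarith+
  then show ?thesis
    using \<open>finite I\<close> eq_card_imp_inj_on card_le_dim_spanning[OF order_refl span_superset]
    by blast
qed

lemma rado_condition_delete:
  fixes A :: "'i \<Rightarrow> 'b set"
  assumes rado: "\<And>S. finite S \<Longrightarrow> card S \<le> dim (\<Union>i\<in>S. A i)"
    and x: "x1 \<in> A i0" "x2 \<in> A i0" "x1 \<noteq> x2"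
  shows "\<exists>x\<in>{x1, x2}. \<forall>S. finite S \<longrightarrow> card S \<le> dim (\<Union>i\<in>S. (A(i0 := A i0 - {x})) i)"
proof (rule ccontr)
  assume "\<not> ?thesis"
  then obtain S1 S2 where fin: "finite S1" "finite S2"
    and S1: "dim (\<Union>i\<in>S1. (A(i0 := A i0 - {x1})) i) < card S1" (is "dim ?U1 < _")
    and S2: "dim (\<Union>i\<in>S2. (A(i0 := A i0 - {x2})) i) < card S2" (is "dim ?U2 < _")
    by (auto simp: not_le)
  have "i0 \<in> S1"
  proof (rule ccontr)
    assume "i0 \<notin> S1"
    then have "?U1 = (\<Union>i\<in>S1. A i)" by auto
    with S1 rado[OF fin(1)] show False by simp
  qed
  have "i0 \<in> S2"
  proof (rule ccontr)
    assume "i0 \<notin> S2"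
    then have "?U2 = (\<Union>i\<in>S2. A i)" by auto
    with S2 rado[OF fin(2)] show False by simp
  qed
  have "(\<Union>i\<in>S1 \<union> S2. A i) \<subseteq> ?U1 \<union> ?U2"
  proof (intro subsetI, elim UN_E)
    fix y i
    assume "i \<in> S1 \<union> S2" "y \<in> A i"
    then show "y \<in> ?U1 \<union> ?U2"
      using \<open>i0 \<in> S1\<close> \<open>i0 \<in> S2\<close> x(3)
      by (cases "i = i0"; cases "y = x1") (auto intro!: UN_I[of i0])
  qed
  then have "dim (\<Union>i\<in>S1 \<union> S2. A i) \<le> dim (?U1 \<union> ?U2)"
    by (rule dim_subset)
  moreover have "(\<Union>i\<in>S1 \<inter> S2 - {i0}. A i) \<subseteq> span ?U1 \<inter> span ?U2"
    by (auto intro!: span_base)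
  then have "dim (\<Union>i\<in>S1 \<inter> S2 - {i0}. A i) \<le> dim (span ?U1 \<inter> span ?U2)"
    by (rule dim_subset)
  moreover have "card (S1 \<union> S2) \<le> dim (\<Union>i\<in>S1 \<union> S2. A i)"
    using fin by (intro rado) simp
  moreover have "card (S1 \<inter> S2 - {i0}) \<le> dim (\<Union>i\<in>S1 \<inter> S2 - {i0}. A i)"
    using fin by (intro rado) simp
  moreover have "card (S1 \<union> S2) + card (S1 \<inter> S2) = card S1 + card S2"
    using card_Un_Int[OF fin] by simp
  moreover have "Suc (card (S1 \<inter> S2 - {i0})) = card (S1 \<inter> S2)"
    using fin \<open>i0 \<in> S1\<close> \<open>i0 \<in> S2\<close> by (intro card_Suc_Diff1) auto
  ultimately show False
    using dim_Un_add_dim_span_Int[of ?U1 ?U2] S1 S2 by linarith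
qed

theorem rado_independent_transversal:
  fixes A :: "'i::finite \<Rightarrow> 'b set"
  assumes "\<And>i. finite (A i)" and "\<And>S. card S \<le> dim (\<Union>i\<in>S. A i)"
  shows "\<exists>f. (\<forall>i. f i \<in> A i) \<and> inj f \<and> independent (range f)"
  using assms
proof (induction "\<Sum>i\<in>UNIV. card (A i)" arbitrary: A rule: less_induct)
  case less
  show ?case
  proof (cases "\<exists>i0 x1 x2. x1 \<in> A i0 \<and> x2 \<in> A i0 \<and> x1 \<noteq> x2")
    case True
    then obtain i0 x1 x2 where "x1 \<in> A i0" "x2 \<in> A i0" "x1 \<noteq> x2"
      by blast
    then obtain x where "x \<in> A i0"
      and rado: "\<forall>S. finite S \<longrightarrow> card S \<le> dim (\<Union>i\<in>S. (A(i0 := A i0 - {x})) i)"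
      using rado_condition_delete[of A] less.prems(2) by blast
    define A' where "A' = A(i0 := A i0 - {x})"
    have "(\<Sum>i\<in>UNIV. card (A' i)) < (\<Sum>i\<in>UNIV. card (A i))"
    proof (rule sum_strict_mono_ex1)
      show "\<forall>i\<in>UNIV. card (A' i) \<le> card (A i)"
        using less.prems(1) by (simp add: A'_def card_mono)
      show "\<exists>i\<in>UNIV. card (A' i) < card (A i)"
        using card_Diff1_less[OF less.prems(1) \<open>x \<in> A i0\<close>] by (auto simp: A'_def)
    qed simp
    moreover have "finite (A' i)" and "A' i \<subseteq> A i" for i
      using less.prems(1) by (auto simp: A'_def)
    ultimately show ?thesis
      using less.hyps[of A'] rado by (fastforce simp: A'_def)
  next
    case False
    have "A i \<noteq> {}" for i
      using less.prems(2)[of "{i}"] by auto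
    with False have "\<forall>i. \<exists>a. A i = {a}"
      by blast
    then obtain f where f: "\<And>i. A i = {f i}"
      by metis
    have "card (UNIV :: 'i set) \<le> dim (range f)"
      using less.prems(2)[of UNIV] by (simp add: f UNION_singleton_eq_range)
    with inj_on_independent_if_card_le_dim[of UNIV f] show ?thesis
      by (auto simp: f)
  qed
qed

end

theorem lemma5:
  fixes e :: "'m::finite \<Rightarrow> 'a::field ^ 'm"
    and T :: "nat \<Rightarrow> 'a ^ 'm \<Rightarrow> 'a ^ 'n::finite"
    and k :: nat
  assumes e_inj: "inj e"
    and e_indep: "vec.independent (range e)"
    and e_span: "vec.span (range e) = UNIV"
    and T_lin: "\<And>j. j \<in> {1..k} \<Longrightarrow> Vector_Spaces.linear (*s) (*s) (T j)"
    and hall: "\<And>S :: 'm set.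
      vec.dim (vec.span {T j (e i) | i j. i \<in> S \<and> j \<in> {1..k}}) \<ge> card S"
  shows "\<exists>\<phi> :: 'm \<Rightarrow> nat. (\<forall>i. \<phi> i \<in> {1..k}) \<and>
           inj (\<lambda>i. T (\<phi> i) (e i)) \<and>
           vec.independent (range (\<lambda>i. T (\<phi> i) (e i)))"
proof -
  define A where "A i = (\<lambda>j. T j (e i)) ` {1..k}" for i
  have "{T j (e i) | i j. i \<in> S \<and> j \<in> {1..k}} = (\<Union>i\<in>S. A i)" for S
    unfolding A_def by blast
  then have "card S \<le> vec.dim (\<Union>i\<in>S. A i)" for S
    using hall[of S] by simp
  then obtain f where f: "\<forall>i. f i \<in> A i" "inj f" "vec.independent (range f)"
    using vec.rado_independent_transversal[of A] by (auto simp: A_def)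
  from f(1) have "\<forall>i. \<exists>j\<in>{1..k}. f i = T j (e i)"
    by (simp add: A_def image_iff)
  then obtain \<phi> where \<phi>: "\<And>i. \<phi> i \<in> {1..k}" "\<And>i. f i = T (\<phi> i) (e i)"
    by metis
  then have "(\<lambda>i. T (\<phi> i) (e i)) = f"
    by auto
  with \<phi>(1) f show ?thesis
    by auto
qed

end
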